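(* If $t$ is an odd positive integer, then there does not exist a skew starter in $\mathbb{Z}_{3t}$.
   Context: A skew starter in $\mathbb{Z}_g$ ($g$ odd) is a set of $(g-1)/2$ unordered pairs $\{\{x_i,y_i\}\}$ such that $\{x_i,y_i\}=\mathbb{Z}_g\setminus\{0\}$, $\{\pm(x_i-y_i)\}=\mathbb{Z}_g\setminus\{0\}$, and $\{\pm(x_i+y_i)\}=\mathbb{Z}_g\setminus\{0\}$. *)

theory Defs
  imports Main
begin

text \<open>Z_g is represented by the residues {0..<g} of type int; arithmetic is taken mod g.
  A skew starter is a set S of (g-1)/2 unordered pairs {x,y} (x \<noteq> y) of residues.\<close>

definition skew_starter :: "int \<Rightarrow> int set set \<Rightarrow> bool" where
  "skew_starter g S \<longleftrightarrow>
     finite S \<and> card S = nat ((g - 1) div 2) \<and>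
     (\<forall>p\<in>S. \<exists>x y. p = {x, y} \<and> x \<noteq> y \<and> x \<in> {0..<g} \<and> y \<in> {0..<g}) \<and>
     \<Union>S = {1..<g} \<and>
     {d. \<exists>x y. {x, y} \<in> S \<and> x \<noteq> y \<and> (d = (x - y) mod g \<or> d = (y - x) mod g)} = {1..<g} \<and>
     {s. \<exists>x y. {x, y} \<in> S \<and> x \<noteq> y \<and> (s = (x + y) mod g \<or> s = (- (x + y)) mod g)} = {1..<g}"

end

theory Submission
  imports Defs "HOL-Number_Theory.Cong"
begin

text \<open>Let \<open>Q = 1\<^sup>2 + \<dots> + (g-1)\<^sup>2\<close>. The elements, the differences and the sums of the
  pairs of a skew starter each run through \<open>1, \<dots>, g-1\<close> exactly once, so each of the three
  families has square sum \<open>Q\<close>. For a pair \<open>{x,y}\<close> the squares of \<open>\<plusminus>(x-y)\<close> and \<open>\<plusminus>(x+y)\<close> add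
  up to \<open>4(x\<^sup>2 + y\<^sup>2)\<close>, whence \<open>2Q \<equiv> 4Q\<close>, i.e. \<open>g\<close> divides \<open>2Q = g(g-1)(2g-1)/3\<close>. This forces
  \<open>3\<close> to divide \<open>(g-1)(2g-1)\<close>, which fails when \<open>3\<close> divides \<open>g\<close>.\<close>

lemma card_UN_eq_sum_card_imp_disjoint:
  assumes "finite S" "\<forall>p\<in>S. finite (F p)"
    and "card (\<Union>p\<in>S. F p) = (\<Sum>p\<in>S. card (F p))"
  shows "\<forall>p\<in>S. \<forall>q\<in>S. p \<noteq> q \<longrightarrow> F p \<inter> F q = {}"
  using assms
proof (induction S rule: finite_induct)
  case empty
  then show ?case by simp
next
  case (insert a S)
  let ?U = "\<Union>p\<in>S. F p"
  have fin: "finite (F a)" "finite ?U" using insert by auto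
  have "card ?U \<le> (\<Sum>p\<in>S. card (F p))" using card_UN_le[OF insert(1)] .
  moreover have "card (F a) + card ?U = card (F a \<union> ?U) + card (F a \<inter> ?U)"
    using card_Un_Int[OF fin] .
  moreover have "card (F a \<union> ?U) = card (F a) + (\<Sum>p\<in>S. card (F p))"
    using insert by simp
  ultimately have "card (F a \<inter> ?U) = 0" and "card ?U = (\<Sum>p\<in>S. card (F p))"
    by linarith+
  then have "F a \<inter> ?U = {}" and "\<forall>p\<in>S. \<forall>q\<in>S. p \<noteq> q \<longrightarrow> F p \<inter> F q = {}"
    using fin insert by simp_all
  then show ?case by blast
qed

lemma sum_UN_of_card_le_2:
  assumes "finite S" "\<forall>p\<in>S. finite (F p) \<and> card (F p) \<le> 2"
    and "card (\<Union>p\<in>S. F p) = 2 * card S"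
  shows "\<forall>p\<in>S. card (F p) = 2"
    and "sum h (\<Union>p\<in>S. F p) = (\<Sum>p\<in>S. sum h (F p))"
proof -
  have "card (\<Union>p\<in>S. F p) \<le> (\<Sum>p\<in>S. card (F p))" using card_UN_le[OF assms(1)] .
  moreover have "(\<Sum>p\<in>S. card (F p)) \<le> (\<Sum>p\<in>S. 2)" by (rule sum_mono) (use assms in auto)
  ultimately have sum_card: "(\<Sum>p\<in>S. card (F p)) = (\<Sum>p\<in>S. 2)" using assms(3) by simp
  then show "\<forall>p\<in>S. card (F p) = 2"
    using sum_mono_inv[OF sum_card] assms(1,2) by blast
  have "\<forall>p\<in>S. \<forall>q\<in>S. p \<noteq> q \<longrightarrow> F p \<inter> F q = {}"
    using card_UN_eq_sum_card_imp_disjoint[of S F] assms sum_card by simp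
  then show "sum h (\<Union>p\<in>S. F p) = (\<Sum>p\<in>S. sum h (F p))"
    using sum.UNION_disjoint[OF assms(1)] assms(2) by blast
qed

lemma sum_squares_mod_doubleton_cong:
  fixes a b g :: int
  assumes "a mod g \<noteq> b mod g"
  shows "[(\<Sum>z\<in>{a mod g, b mod g}. z\<^sup>2) = a\<^sup>2 + b\<^sup>2] (mod g)"
proof -
  have "[(a mod g)\<^sup>2 + (b mod g)\<^sup>2 = a\<^sup>2 + b\<^sup>2] (mod g)"
    by (intro cong_add cong_pow) (simp_all add: cong_def)
  then show ?thesis using assms by simp
qed

lemma six_times_sum_squares:
  "6 * (\<Sum>z\<in>{1..<int n}. z\<^sup>2) = (int n - 1) * int n * (2 * int n - 1)"
proof (induction n)
  case 0
  then show ?case by simp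
next
  case (Suc n)
  show ?case
  proof (cases "n = 0")
    case False
    then have "{1..<int (Suc n)} = insert (int n) {1..<int n}" by auto
    then show ?thesis using Suc.IH by (simp add: algebra_simps power2_eq_square)
  qed simp
qed

lemma not_dvd_twice_sum_squares:
  fixes g :: int
  assumes "g > 0" "3 dvd g"
  shows "\<not> g dvd 2 * (\<Sum>z\<in>{1..<g}. z\<^sup>2)"
proof
  assume "g dvd 2 * (\<Sum>z\<in>{1..<g}. z\<^sup>2)"
  then have "g * 3 dvd 3 * (2 * (\<Sum>z\<in>{1..<g}. z\<^sup>2))"
    by (metis mult.commute mult_dvd_mono dvd_refl)
  also have "3 * (2 * (\<Sum>z\<in>{1..<g}. z\<^sup>2)) = g * ((g - 1) * (2 * g - 1))"
    using six_times_sum_squares[of "nat g"] assms(1) by (simp add: algebra_simps)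
  finally have "3 dvd (g - 1) * (2 * g - 1)" using assms(1) by simp
  moreover obtain t where "g = 3 * t" using assms(2) by blast
  then have "(g - 1) * (2 * g - 1) = 3 * (6 * t * t - 3 * t) + 1" by (simp add: algebra_simps)
  ultimately show False by presburger
qed

definition pair_diffs :: "int \<Rightarrow> int set \<Rightarrow> int set" where
  "pair_diffs g p = {d. \<exists>x y. p = {x, y} \<and> x \<noteq> y \<and> (d = (x - y) mod g \<or> d = (y - x) mod g)}"

definition pair_sums :: "int \<Rightarrow> int set \<Rightarrow> int set" where
  "pair_sums g p = {s. \<exists>x y. p = {x, y} \<and> x \<noteq> y \<and> (s = (x + y) mod g \<or> s = (- (x + y)) mod g)}"

lemma pair_diffs_doubleton:
  "x \<noteq> y \<Longrightarrow> pair_diffs g {x, y} = {(x - y) mod g, (y - x) mod g}"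
  unfolding pair_diffs_def by (auto simp: doubleton_eq_iff)

lemma pair_sums_doubleton:
  assumes "x \<noteq> y"
  shows "pair_sums g {x, y} = {(x + y) mod g, (- (x + y)) mod g}"
  unfolding pair_sums_def
proof (intro set_eqI iffI)
  fix s assume "s \<in> {s. \<exists>a b. {x, y} = {a, b} \<and> a \<noteq> b \<and> (s = (a + b) mod g \<or> s = (- (a + b)) mod g)}"
  then obtain a b where "{x, y} = {a, b}" "s = (a + b) mod g \<or> s = (- (a + b)) mod g"
    by blast
  moreover from this(1) have "a + b = x + y" by (auto simp: doubleton_eq_iff)
  ultimately show "s \<in> {(x + y) mod g, (- (x + y)) mod g}" by auto
qed (use assms in blast)

lemma UN_pair_diffs:
  "(\<Union>p\<in>S. pair_diffs g p)
     = {d. \<exists>x y. {x, y} \<in> S \<and> x \<noteq> y \<and> (d = (x - y) mod g \<or> d = (y - x) mod g)}"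
  unfolding pair_diffs_def by blast

lemma UN_pair_sums:
  "(\<Union>p\<in>S. pair_sums g p)
     = {s. \<exists>x y. {x, y} \<in> S \<and> x \<noteq> y \<and> (s = (x + y) mod g \<or> s = (- (x + y)) mod g)}"
  unfolding pair_sums_def by blast

lemma pair_diffs_sums_squares_cong:
  assumes "x \<noteq> y" "card (pair_diffs g {x, y}) = 2" "card (pair_sums g {x, y}) = 2"
  shows "[(\<Sum>z\<in>pair_diffs g {x, y}. z\<^sup>2) + (\<Sum>z\<in>pair_sums g {x, y}. z\<^sup>2)
          = 4 * (\<Sum>z\<in>{x, y}. z\<^sup>2)] (mod g)"
proof -
  have "(x - y) mod g \<noteq> (y - x) mod g" "(x + y) mod g \<noteq> (- (x + y)) mod g"
    using assms by (auto simp: pair_diffs_doubleton pair_sums_doubleton)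
  then have "[(\<Sum>z\<in>pair_diffs g {x, y}. z\<^sup>2) + (\<Sum>z\<in>pair_sums g {x, y}. z\<^sup>2)
      = ((x - y)\<^sup>2 + (y - x)\<^sup>2) + ((x + y)\<^sup>2 + (- (x + y))\<^sup>2)] (mod g)"
    unfolding pair_diffs_doubleton[OF assms(1)] pair_sums_doubleton[OF assms(1)]
    by (intro cong_add sum_squares_mod_doubleton_cong)
  also have "((x - y)\<^sup>2 + (y - x)\<^sup>2) + ((x + y)\<^sup>2 + (- (x + y))\<^sup>2) = 4 * (\<Sum>z\<in>{x, y}. z\<^sup>2)"
    using assms(1) by (simp add: power2_eq_square algebra_simps)
  finally show ?thesis .
qed

lemma skew_starter_dvd_twice_sum_squares:
  fixes g :: int
  assumes "skew_starter g S" "g > 0" "odd g"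
  shows "g dvd 2 * (\<Sum>z\<in>{1..<g}. z\<^sup>2)"
proof -
  define Q where "Q = (\<Sum>z\<in>{1..<g}. z\<^sup>2)"
  have fin: "finite S" and pairs: "\<forall>p\<in>S. \<exists>x y. p = {x, y} \<and> x \<noteq> y"
    using assms(1) unfolding skew_starter_def by fastforce+
  have "card S = nat ((g - 1) div 2)" using assms(1) by (simp add: skew_starter_def)
  moreover have "g - 1 = 2 * ((g - 1) div 2)" using assms(3) by simp
  ultimately have card_S: "card {1..<g} = 2 * card S" by simp
  have card_le_2: "finite p \<and> card p \<le> 2" "finite (pair_diffs g p) \<and> card (pair_diffs g p) \<le> 2"
    "finite (pair_sums g p) \<and> card (pair_sums g p) \<le> 2" if p: "p \<in> S" for p
  proof -
    obtain x y where "p = {x, y}" "x \<noteq> y" using bspec[OF pairs p] by auto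
    then show "finite p \<and> card p \<le> 2" "finite (pair_diffs g p) \<and> card (pair_diffs g p) \<le> 2"
      "finite (pair_sums g p) \<and> card (pair_sums g p) \<le> 2"
      by (simp_all add: card_insert_if pair_diffs_doubleton pair_sums_doubleton)
  qed
  have U: "(\<Union>p\<in>S. p) = {1..<g}" "(\<Union>p\<in>S. pair_diffs g p) = {1..<g}"
    "(\<Union>p\<in>S. pair_sums g p) = {1..<g}"
    using assms(1) by (simp_all add: skew_starter_def UN_pair_diffs UN_pair_sums)
  have elements: "Q = (\<Sum>p\<in>S. \<Sum>z\<in>p. z\<^sup>2)"
    using sum_UN_of_card_le_2(2)[of S "\<lambda>p. p", OF fin] card_le_2(1) U(1) card_S
    unfolding Q_def by simp
  have diffs: "\<forall>p\<in>S. card (pair_diffs g p) = 2" "Q = (\<Sum>p\<in>S. \<Sum>z\<in>pair_diffs g p. z\<^sup>2)"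
    using sum_UN_of_card_le_2[of S "pair_diffs g", OF fin] card_le_2(2) U(2) card_S
    unfolding Q_def by simp_all
  have sums: "\<forall>p\<in>S. card (pair_sums g p) = 2" "Q = (\<Sum>p\<in>S. \<Sum>z\<in>pair_sums g p. z\<^sup>2)"
    using sum_UN_of_card_le_2[of S "pair_sums g", OF fin] card_le_2(3) U(3) card_S
    unfolding Q_def by simp_all
  have "[(\<Sum>p\<in>S. (\<Sum>z\<in>pair_diffs g p. z\<^sup>2) + (\<Sum>z\<in>pair_sums g p. z\<^sup>2))
      = (\<Sum>p\<in>S. 4 * (\<Sum>z\<in>p. z\<^sup>2))] (mod g)" (is "[?lhs = ?rhs] (mod g)")
  proof (rule cong_sum)
    fix p assume p: "p \<in> S"
    then obtain x y where xy: "p = {x, y}" "x \<noteq> y" using bspec[OF pairs p] by auto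
    moreover have "card (pair_diffs g {x, y}) = 2" "card (pair_sums g {x, y}) = 2"
      using diffs(1) sums(1) p xy(1) by auto
    ultimately show "[(\<Sum>z\<in>pair_diffs g p. z\<^sup>2) + (\<Sum>z\<in>pair_sums g p. z\<^sup>2)
        = 4 * (\<Sum>z\<in>p. z\<^sup>2)] (mod g)"
      using pair_diffs_sums_squares_cong by blast
  qed
  moreover have "?lhs = Q + Q"
    unfolding sum.distrib diffs(2)[symmetric] sums(2)[symmetric] ..
  moreover have "?rhs = 4 * Q"
    unfolding elements sum_distrib_left ..
  ultimately have "[Q + Q = 4 * Q] (mod g)" by (simp only:)
  then have "g dvd 2 * Q" by (simp add: cong_iff_dvd_diff cong_sym_eq)
  then show ?thesis by (simp add: Q_def)
qed

theorem mainTheorem7: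
  fixes t :: int
  assumes "t > 0" and "odd t"
  shows "\<not> (\<exists>S. skew_starter (3 * t) S)"
proof
  assume "\<exists>S. skew_starter (3 * t) S"
  then obtain S where "skew_starter (3 * t) S" ..
  then have "3 * t dvd 2 * (\<Sum>z\<in>{1..<3 * t}. z\<^sup>2)"
    using skew_starter_dvd_twice_sum_squares assms by simp
  moreover have "\<not> 3 * t dvd 2 * (\<Sum>z\<in>{1..<3 * t}. z\<^sup>2)"
    using not_dvd_twice_sum_squares assms(1) by simp
  ultimately show False by contradiction
qed

end
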